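(* Let $F=C^\infty(]0,1[,\mathbb{R})$ with the Fr\'echet topology given by the seminorms $\|f\|_{n,k}=\sup_{\frac{1}{n+1}\le x\le\frac{n}{n+1}}|f^{(k)}(x)|$, $(n,k)\in\mathbb{N}^*\times\mathbb{N}$. Let $\mathcal{A}=\{f\in C^\infty(]0,1[,]0,1[)\mid \lim_{x\to1}f(x)=1,\ \lim_{x\to0}f(x)=0\}$ and $\mathcal{D}=\{f\in\mathcal{A}\mid \inf_{x\in]0,1[}f'(x)>0 \text{ and } \sup_{x\in]0,1[}f'(x)>0\}$, with the topology induced by $F$. Then $\mathcal{D}$ is contractible. *)

theory Defs
  imports "HOL-Analysis.Analysis"
begin

text \<open>Elements of C^infinity(]0,1[, R) are represented as functions real => real that
  vanish outside ]0,1[ (so that each smooth function on ]0,1[ has a unique representative)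
  and all of whose iterated derivatives are differentiable at every point of ]0,1[.\<close>

definition Cinf01 :: "(real \<Rightarrow> real) set" where
  "Cinf01 = {f. (\<forall>x. x \<notin> {0<..<1} \<longrightarrow> f x = 0) \<and>
                 (\<forall>k. \<forall>x\<in>{0<..<1}. ((deriv ^^ k) f) differentiable (at x))}"

definition seminorm01 :: "nat \<Rightarrow> nat \<Rightarrow> (real \<Rightarrow> real) \<Rightarrow> real" where
  "seminorm01 n k f = (SUP x\<in>{1 / (real n + 1) .. real n / (real n + 1)}. \<bar>(deriv ^^ k) f x\<bar>)"

definition Frechet01 :: "(real \<Rightarrow> real) topology" where
  "Frechet01 = topology (\<lambda>U. U \<subseteq> Cinf01 \<and>
     (\<forall>f\<in>U. \<exists>S::(nat \<times> nat) set. \<exists>e>0. finite S \<and> (\<forall>(n,k)\<in>S. n \<ge> 1) \<and>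
        (\<forall>g\<in>Cinf01. (\<forall>(n,k)\<in>S. seminorm01 n k (\<lambda>x. g x - f x) < e) \<longrightarrow> g \<in> U)))"

definition A01 :: "(real \<Rightarrow> real) set" where
  "A01 = {f \<in> Cinf01. (\<forall>x\<in>{0<..<1}. f x \<in> {0<..<1}) \<and>
                      (f \<longlongrightarrow> 1) (at_left 1) \<and> (f \<longlongrightarrow> 0) (at_right 0)}"

definition D01 :: "(real \<Rightarrow> real) set" where
  "D01 = {f \<in> A01. (INF x\<in>{0<..<1}. ereal (deriv f x)) > 0 \<and>
                    (SUP x\<in>{0<..<1}. ereal (deriv f x)) > 0}"

end

theory Submission
  imports Defs
begin

text \<open>The straight-line homotopy H(t, f) = (1 - t) f + t c to a fixed point c of a convex subset
  of C^infinity(]0,1[) is continuous for the seminorm topology, because every seminorm of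
  H(s, g) - H(t, f) = (1 - s)(g - f) + (s - t)(c - f) is small when g is close to f and s to t.
  The set D01 is convex (a convex combination of functions whose derivatives are bounded below
  by r and s has derivative bounded below by min r s) and contains the identity of ]0,1[, hence
  it is contractible.\<close>

lemma Cinf01_has_deriv_iterate:
  assumes "f \<in> Cinf01" "x \<in> {0<..<1}"
  shows "((deriv ^^ k) f has_real_derivative (deriv ^^ Suc k) f x) (at x)"
  using assms unfolding Cinf01_def by (auto simp: DERIV_deriv_iff_real_differentiable)

lemma deriv_iterate_lincomb:
  assumes f: "f \<in> Cinf01" and g: "g \<in> Cinf01" and x: "x \<in> {0<..<1}"
  shows "(deriv ^^ k) (\<lambda>x. a * f x + b * g x) x = a * (deriv ^^ k) f x + b * (deriv ^^ k) g x"
  using x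
proof (induction k arbitrary: x)
  case (Suc k)
  have "((\<lambda>y. a * (deriv ^^ k) f y + b * (deriv ^^ k) g y) has_real_derivative
          a * (deriv ^^ Suc k) f x + b * (deriv ^^ Suc k) g x) (at x)"
    using Cinf01_has_deriv_iterate[OF f Suc.prems] Cinf01_has_deriv_iterate[OF g Suc.prems]
    by (intro DERIV_add DERIV_cmult)
  then have "((deriv ^^ k) (\<lambda>x. a * f x + b * g x) has_real_derivative
          a * (deriv ^^ Suc k) f x + b * (deriv ^^ Suc k) g x) (at x)"
    by (rule has_field_derivative_transform_within_open[OF _ open_greaterThanLessThan Suc.prems])
      (simp add: Suc.IH)
  then show ?case by (simp add: DERIV_imp_deriv)
qed simp

lemma Cinf01_lincomb:
  assumes f: "f \<in> Cinf01" and g: "g \<in> Cinf01"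
  shows "(\<lambda>x. a * f x + b * g x) \<in> Cinf01"
proof -
  have "((deriv ^^ k) (\<lambda>x. a * f x + b * g x)) differentiable (at x)"
    if x: "x \<in> {0<..<1}" for k x
  proof -
    have "((\<lambda>y. a * (deriv ^^ k) f y + b * (deriv ^^ k) g y) has_real_derivative
            a * (deriv ^^ Suc k) f x + b * (deriv ^^ Suc k) g x) (at x)"
      using Cinf01_has_deriv_iterate[OF f x] Cinf01_has_deriv_iterate[OF g x]
      by (intro DERIV_add DERIV_cmult)
    then have "((deriv ^^ k) (\<lambda>x. a * f x + b * g x) has_real_derivative
            a * (deriv ^^ Suc k) f x + b * (deriv ^^ Suc k) g x) (at x)"
      by (rule has_field_derivative_transform_within_open[OF _ open_greaterThanLessThan x])
        (simp add: deriv_iterate_lincomb[OF f g])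
    then show ?thesis using real_differentiable_def by blast
  qed
  then show ?thesis using f g unfolding Cinf01_def by auto
qed

lemma Cinf01_diff: "f \<in> Cinf01 \<Longrightarrow> g \<in> Cinf01 \<Longrightarrow> (\<lambda>x. f x - g x) \<in> Cinf01"
  using Cinf01_lincomb[of f g 1 "-1"] by simp

lemma seminorm_interval_subset:
  "{1 / (real n + 1) .. real n / (real n + 1)} \<subseteq> {0<..<1}"
proof
  fix x assume x: "x \<in> {1 / (real n + 1) .. real n / (real n + 1)}"
  have "0 < 1 / (real n + 1)" by simp
  also have "\<dots> \<le> x" using x by simp
  finally have "0 < x" .
  have "x \<le> real n / (real n + 1)" using x by simp
  also have "\<dots> < 1" by simp
  finally show "x \<in> {0<..<1}" using \<open>0 < x\<close> by simp
qed

lemma seminorm_interval_nonempty: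
  assumes "n \<ge> 1"
  shows "{1 / (real n + 1) .. real n / (real n + 1)} \<noteq> {}"
  using assms by (simp add: divide_right_mono)

lemma bdd_above_seminorm01_image:
  assumes f: "f \<in> Cinf01" and n: "n \<ge> 1"
  shows "bdd_above ((\<lambda>x. \<bar>(deriv ^^ k) f x\<bar>) ` {1 / (real n + 1) .. real n / (real n + 1)})"
proof -
  let ?I = "{1 / (real n + 1) .. real n / (real n + 1)}"
  have "continuous_on ?I ((deriv ^^ k) f)"
  proof (rule continuous_at_imp_continuous_on, intro ballI)
    fix x assume "x \<in> ?I"
    then have "x \<in> {0<..<1}" using seminorm_interval_subset by blast
    then show "isCont ((deriv ^^ k) f) x"
      using f unfolding Cinf01_def by (auto intro: differentiable_imp_continuous_within)
  qed
  then have "continuous_on ?I (\<lambda>x. \<bar>(deriv ^^ k) f x\<bar>)"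
    by (intro continuous_intros)
  then have "compact ((\<lambda>x. \<bar>(deriv ^^ k) f x\<bar>) ` ?I)"
    by (intro compact_continuous_image) auto
  then show ?thesis by (intro bounded_imp_bdd_above compact_imp_bounded)
qed

lemma seminorm01_upper:
  assumes "f \<in> Cinf01" "n \<ge> 1" "x \<in> {1 / (real n + 1) .. real n / (real n + 1)}"
  shows "\<bar>(deriv ^^ k) f x\<bar> \<le> seminorm01 n k f"
  unfolding seminorm01_def
  by (rule cSUP_upper[OF assms(3) bdd_above_seminorm01_image[OF assms(1,2)]])

lemma seminorm01_nonneg:
  assumes f: "f \<in> Cinf01" and n: "n \<ge> 1"
  shows "0 \<le> seminorm01 n k f"
proof -
  obtain x where "x \<in> {1 / (real n + 1) .. real n / (real n + 1)}"
    using seminorm_interval_nonempty[OF n] by blast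
  from seminorm01_upper[OF f n this, of k] show ?thesis by linarith
qed

lemma seminorm01_zero:
  assumes "n \<ge> 1"
  shows "seminorm01 n k (\<lambda>x. 0) = 0"
proof -
  have "(deriv ^^ k) (\<lambda>x::real. 0::real) = (\<lambda>x. 0)"
    by (induction k) auto
  then show ?thesis
    unfolding seminorm01_def using seminorm_interval_nonempty[OF assms] by simp
qed

lemma seminorm01_lincomb_le:
  assumes f: "f \<in> Cinf01" and g: "g \<in> Cinf01" and n: "n \<ge> 1"
  shows "seminorm01 n k (\<lambda>x. a * f x + b * g x)
           \<le> \<bar>a\<bar> * seminorm01 n k f + \<bar>b\<bar> * seminorm01 n k g"
  unfolding seminorm01_def[of n k "\<lambda>x. a * f x + b * g x"]
proof (rule cSUP_least[OF seminorm_interval_nonempty[OF n]])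
  fix x assume x: "x \<in> {1 / (real n + 1) .. real n / (real n + 1)}"
  then have "x \<in> {0<..<1}" using seminorm_interval_subset by blast
  then have "\<bar>(deriv ^^ k) (\<lambda>x. a * f x + b * g x) x\<bar>
               = \<bar>a * (deriv ^^ k) f x + b * (deriv ^^ k) g x\<bar>"
    using deriv_iterate_lincomb[OF f g] by simp
  also have "\<dots> \<le> \<bar>a\<bar> * \<bar>(deriv ^^ k) f x\<bar> + \<bar>b\<bar> * \<bar>(deriv ^^ k) g x\<bar>"
    by (metis abs_mult abs_triangle_ineq)
  also have "\<dots> \<le> \<bar>a\<bar> * seminorm01 n k f + \<bar>b\<bar> * seminorm01 n k g"
    by (intro add_mono mult_left_mono seminorm01_upper[OF f n x] seminorm01_upper[OF g n x]) auto
  finally show "\<bar>(deriv ^^ k) (\<lambda>x. a * f x + b * g x) x\<bar>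
                  \<le> \<bar>a\<bar> * seminorm01 n k f + \<bar>b\<bar> * seminorm01 n k g" .
qed

lemma seminorm01_finite_bound:
  assumes "finite T"
  obtains M where "M \<ge> 0" "\<And>n k. (n,k) \<in> T \<Longrightarrow> seminorm01 n k h \<le> M"
proof (rule that)
  show "0 \<le> (\<Sum>(n,k)\<in>T. \<bar>seminorm01 n k h\<bar>)" by (intro sum_nonneg) auto
  fix n k assume "(n,k) \<in> T"
  then have "\<bar>seminorm01 n k h\<bar> \<le> (\<Sum>(n,k)\<in>T. \<bar>seminorm01 n k h\<bar>)"
    using member_le_sum[of "(n,k)" T "\<lambda>(n,k). \<bar>seminorm01 n k h\<bar>"] assms by auto
  then show "seminorm01 n k h \<le> (\<Sum>(n,k)\<in>T. \<bar>seminorm01 n k h\<bar>)" by linarith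
qed

subsection \<open>The Fr\'echet topology\<close>

definition seminorm_ball :: "(nat \<times> nat) set \<Rightarrow> real \<Rightarrow> (real \<Rightarrow> real) \<Rightarrow> (real \<Rightarrow> real) set"
  where "seminorm_ball S e f = {g \<in> Cinf01. \<forall>(n,k)\<in>S. seminorm01 n k (\<lambda>x. g x - f x) < e}"

definition seminorm_nhd :: "(real \<Rightarrow> real) set \<Rightarrow> (real \<Rightarrow> real) \<Rightarrow> bool"
  where "seminorm_nhd U f \<longleftrightarrow>
    (\<exists>S. \<exists>e>0. finite S \<and> (\<forall>(n,k)\<in>S. n \<ge> 1) \<and> seminorm_ball S e f \<subseteq> U)"

lemma seminorm_ball_subset_iff:
  "seminorm_ball S e f \<subseteq> U \<longleftrightarrow>
     (\<forall>g\<in>Cinf01. (\<forall>(n,k)\<in>S. seminorm01 n k (\<lambda>x. g x - f x) < e) \<longrightarrow> g \<in> U)"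
  unfolding seminorm_ball_def by blast

lemma seminorm_ball_mono:
  "S \<subseteq> T \<Longrightarrow> e' \<le> e \<Longrightarrow> seminorm_ball T e' f \<subseteq> seminorm_ball S e f"
  unfolding seminorm_ball_def by fastforce

lemma seminorm_nhd_mono: "seminorm_nhd U f \<Longrightarrow> U \<subseteq> V \<Longrightarrow> seminorm_nhd V f"
  unfolding seminorm_nhd_def by blast

lemma seminorm_nhd_Int:
  assumes "seminorm_nhd U f" "seminorm_nhd V f"
  shows "seminorm_nhd (U \<inter> V) f"
proof -
  obtain S e where S: "e > 0" "finite S" "\<forall>(n,k)\<in>S. n \<ge> 1" "seminorm_ball S e f \<subseteq> U"
    using assms(1) unfolding seminorm_nhd_def by blast
  obtain T e' where T: "e' > 0" "finite T" "\<forall>(n,k)\<in>T. n \<ge> 1" "seminorm_ball T e' f \<subseteq> V"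
    using assms(2) unfolding seminorm_nhd_def by blast
  have "seminorm_ball (S \<union> T) (min e e') f \<subseteq> U \<inter> V"
    using seminorm_ball_mono[of S "S \<union> T" "min e e'" e f]
      seminorm_ball_mono[of T "S \<union> T" "min e e'" e' f] S(4) T(4) by auto
  moreover have "\<forall>(n,k)\<in>S \<union> T. n \<ge> 1" using S(3) T(3) by blast
  ultimately show ?thesis
    unfolding seminorm_nhd_def using S(1,2) T(1,2)
    by (intro exI[of _ "S \<union> T"] exI[of _ "min e e'"]) simp
qed

lemma istopology_seminorm_nhd:
  "istopology (\<lambda>U. U \<subseteq> Cinf01 \<and> (\<forall>f\<in>U. seminorm_nhd U f))"
  unfolding istopology_def
proof (rule conjI; intro allI impI)
  fix U V
  assume "U \<subseteq> Cinf01 \<and> (\<forall>f\<in>U. seminorm_nhd U f)" "V \<subseteq> Cinf01 \<and> (\<forall>f\<in>V. seminorm_nhd V f)"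
  then show "U \<inter> V \<subseteq> Cinf01 \<and> (\<forall>f\<in>U \<inter> V. seminorm_nhd (U \<inter> V) f)"
    using seminorm_nhd_Int by blast
next
  fix K assume K: "\<forall>U\<in>K. U \<subseteq> Cinf01 \<and> (\<forall>f\<in>U. seminorm_nhd U f)"
  show "\<Union>K \<subseteq> Cinf01 \<and> (\<forall>f\<in>\<Union>K. seminorm_nhd (\<Union>K) f)"
  proof (intro conjI ballI)
    show "\<Union>K \<subseteq> Cinf01" using K by blast
    fix f assume "f \<in> \<Union>K"
    then obtain U where "U \<in> K" "f \<in> U" by blast
    then show "seminorm_nhd (\<Union>K) f" using K seminorm_nhd_mono[of U f "\<Union>K"] by blast
  qed
qed

lemma openin_Frechet01:
  "openin Frechet01 U \<longleftrightarrow> U \<subseteq> Cinf01 \<and> (\<forall>f\<in>U. seminorm_nhd U f)"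
proof -
  have "openin Frechet01 = (\<lambda>U. U \<subseteq> Cinf01 \<and> (\<forall>f\<in>U. seminorm_nhd U f))"
    unfolding Frechet01_def using istopology_seminorm_nhd
    unfolding seminorm_nhd_def seminorm_ball_subset_iff by (rule topology_inverse')
  then show ?thesis by simp
qed

lemma topspace_Frechet01: "topspace Frechet01 = Cinf01"
proof -
  have "seminorm_nhd Cinf01 f" for f
    unfolding seminorm_nhd_def seminorm_ball_def
    by (intro exI[of _ "{}"] exI[of _ "1::real"]) auto
  then have "openin Frechet01 Cinf01" unfolding openin_Frechet01 by blast
  then show ?thesis
    by (metis openin_Frechet01 openin_subset openin_topspace subset_antisym)
qed

lemma center_in_seminorm_ball:
  assumes "f \<in> Cinf01" "\<forall>(n,k)\<in>S. n \<ge> 1" "e > 0"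
  shows "f \<in> seminorm_ball S e f"
  using assms seminorm01_zero unfolding seminorm_ball_def by auto

lemma openin_seminorm_ball:
  assumes f: "f \<in> Cinf01" and S: "finite S" "\<forall>(n,k)\<in>S. n \<ge> 1" and "e > 0"
  shows "openin Frechet01 (seminorm_ball S e f)"
  unfolding openin_Frechet01
proof (intro conjI ballI)
  show "seminorm_ball S e f \<subseteq> Cinf01" unfolding seminorm_ball_def by auto
  fix g assume g: "g \<in> seminorm_ball S e f"
  then have gC: "g \<in> Cinf01" unfolding seminorm_ball_def by auto
  define m where "m = Max (insert 0 ((\<lambda>(n,k). seminorm01 n k (\<lambda>x. g x - f x)) ` S))"
  have fin: "finite (insert 0 ((\<lambda>(n,k). seminorm01 n k (\<lambda>x. g x - f x)) ` S))" using S by simp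
  have "m < e"
    using g S \<open>e > 0\<close> unfolding m_def seminorm_ball_def by (auto simp: Max_less_iff[OF fin])
  have m_ge: "seminorm01 n k (\<lambda>x. g x - f x) \<le> m" if "(n,k) \<in> S" for n k
    unfolding m_def using that fin by (intro Max_ge) force+
  have "seminorm_ball S (e - m) g \<subseteq> seminorm_ball S e f"
  proof
    fix h assume h: "h \<in> seminorm_ball S (e - m) g"
    then have hC: "h \<in> Cinf01" unfolding seminorm_ball_def by auto
    have "seminorm01 n k (\<lambda>x. h x - f x) < e" if nk: "(n,k) \<in> S" for n k
    proof -
      have n: "n \<ge> 1" using S nk by auto
      have "seminorm01 n k (\<lambda>x. 1 * (h x - g x) + 1 * (g x - f x))
              \<le> seminorm01 n k (\<lambda>x. h x - g x) + seminorm01 n k (\<lambda>x. g x - f x)"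
        using seminorm01_lincomb_le[OF Cinf01_diff[OF hC gC] Cinf01_diff[OF gC f] n, of k 1 1]
        by simp
      moreover have "seminorm01 n k (\<lambda>x. h x - g x) < e - m"
        using h nk unfolding seminorm_ball_def by auto
      ultimately show ?thesis using m_ge[OF nk] by simp
    qed
    then show "h \<in> seminorm_ball S e f" using hC unfolding seminorm_ball_def by auto
  qed
  then show "seminorm_nhd (seminorm_ball S e f) g"
    unfolding seminorm_nhd_def using S \<open>m < e\<close> by (intro exI[of _ S] exI[of _ "e - m"]) auto
qed

subsection \<open>Convex subsets are contractible\<close>

lemma seminorm01_homotopy_diff_le:
  assumes f: "f \<in> Cinf01" and g: "g \<in> Cinf01" and c: "c \<in> Cinf01"
    and n: "n \<ge> 1" and s: "s \<in> {0..1}"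
  shows "seminorm01 n k (\<lambda>x. ((1 - s) * g x + s * c x) - ((1 - t) * f x + t * c x))
           \<le> seminorm01 n k (\<lambda>x. g x - f x) + \<bar>s - t\<bar> * seminorm01 n k (\<lambda>x. c x - f x)"
proof -
  have gfC: "(\<lambda>x. g x - f x) \<in> Cinf01" and cfC: "(\<lambda>x. c x - f x) \<in> Cinf01"
    using Cinf01_diff f g c by auto
  have "(\<lambda>x. ((1 - s) * g x + s * c x) - ((1 - t) * f x + t * c x))
          = (\<lambda>x. (1 - s) * (g x - f x) + (s - t) * (c x - f x))"
    by (auto simp: algebra_simps)
  then have "seminorm01 n k (\<lambda>x. ((1 - s) * g x + s * c x) - ((1 - t) * f x + t * c x))
      \<le> \<bar>1 - s\<bar> * seminorm01 n k (\<lambda>x. g x - f x) + \<bar>s - t\<bar> * seminorm01 n k (\<lambda>x. c x - f x)"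
    using seminorm01_lincomb_le[OF gfC cfC n] by simp
  also have "\<dots> \<le> seminorm01 n k (\<lambda>x. g x - f x) + \<bar>s - t\<bar> * seminorm01 n k (\<lambda>x. c x - f x)"
    using s seminorm01_nonneg[OF gfC n] by (intro add_right_mono mult_left_le_one_le) auto
  finally show ?thesis .
qed

lemma convex_homotopy_in_seminorm_ball:
  assumes f: "f \<in> Cinf01" and g: "g \<in> seminorm_ball T (e / 2) f" and c: "c \<in> Cinf01"
    and T: "\<forall>(n,k)\<in>T. n \<ge> 1" and s: "s \<in> {0..1}"
    and small: "\<And>n k. (n,k) \<in> T \<Longrightarrow> \<bar>s - t\<bar> * seminorm01 n k (\<lambda>x. c x - f x) \<le> e / 2"
  shows "(\<lambda>x. (1 - s) * g x + s * c x) \<in> seminorm_ball T e (\<lambda>x. (1 - t) * f x + t * c x)"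
proof -
  have gC: "g \<in> Cinf01" using g unfolding seminorm_ball_def by auto
  have "seminorm01 n k (\<lambda>x. ((1 - s) * g x + s * c x) - ((1 - t) * f x + t * c x)) < e"
    if nk: "(n,k) \<in> T" for n k
  proof -
    have n: "n \<ge> 1" using nk T by auto
    have "seminorm01 n k (\<lambda>x. ((1 - s) * g x + s * c x) - ((1 - t) * f x + t * c x))
            \<le> seminorm01 n k (\<lambda>x. g x - f x) + \<bar>s - t\<bar> * seminorm01 n k (\<lambda>x. c x - f x)"
      by (rule seminorm01_homotopy_diff_le[OF f gC c n s])
    also have "\<dots> < e / 2 + e / 2"
      using g nk small[OF nk] unfolding seminorm_ball_def by (intro add_less_le_mono) auto
    finally show ?thesis by simp
  qed
  then show ?thesis using Cinf01_lincomb[OF gC c] unfolding seminorm_ball_def by auto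
qed

lemma openin_convex_homotopy_preimage:
  assumes c: "c \<in> Cinf01" and S: "S \<subseteq> Cinf01" and U: "openin Frechet01 U"
  shows "openin (prod_topology (top_of_set {0..1}) (subtopology Frechet01 S))
           {(t, f) \<in> {0..1} \<times> S. (\<lambda>x. (1 - t) * f x + t * c x) \<in> U}"
    (is "openin ?P {(t, f) \<in> _. ?H t f \<in> U}")
proof (subst openin_subopen, intro ballI)
  fix z assume "z \<in> {(t, f) \<in> {0..1} \<times> S. ?H t f \<in> U}"
  then obtain t f where z: "z = (t, f)" and t: "t \<in> {0..1}" and "f \<in> S" and "?H t f \<in> U"
    by auto
  then have fC: "f \<in> Cinf01" using S by auto
  obtain T e where "e > 0" and T: "finite T" "\<forall>(n,k)\<in>T. n \<ge> 1"
    and ball_U: "seminorm_ball T e (?H t f) \<subseteq> U"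
    using U \<open>?H t f \<in> U\<close> unfolding openin_Frechet01 seminorm_nhd_def by blast
  obtain M where "M \<ge> 0" and M_ge: "\<And>n k. (n,k) \<in> T \<Longrightarrow> seminorm01 n k (\<lambda>x. c x - f x) \<le> M"
    using seminorm01_finite_bound[OF T(1)] by blast
  define d where "d = e / (2 * (M + 1))"
  have "d > 0" unfolding d_def using \<open>e > 0\<close> \<open>0 \<le> M\<close> by simp
  have "d * M \<le> e / 2"
    unfolding d_def using \<open>e > 0\<close> \<open>0 \<le> M\<close> by (simp add: field_simps)
  define V where "V = ({0..1} \<inter> {t - d <..< t + d}) \<times> (S \<inter> seminorm_ball T (e / 2) f)"
  have "openin ?P V"
    unfolding V_def openin_prod_Times_iff
    using openin_seminorm_ball[OF fC T] \<open>e > 0\<close> by (auto intro: openin_subtopology_Int2)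
  moreover have "z \<in> V"
    unfolding V_def using z t \<open>f \<in> S\<close> \<open>d > 0\<close> center_in_seminorm_ball[OF fC T(2)] \<open>e > 0\<close>
    by auto
  moreover have "V \<subseteq> {(t, f) \<in> {0..1} \<times> S. ?H t f \<in> U}"
  proof
    fix w assume "w \<in> V"
    obtain s g where w: "w = (s, g)" by (cases w)
    then have s: "s \<in> {0..1}" "\<bar>s - t\<bar> < d" and "g \<in> S" and g: "g \<in> seminorm_ball T (e / 2) f"
      using \<open>w \<in> V\<close> unfolding V_def by (auto simp: abs_less_iff)
    have "\<bar>s - t\<bar> * seminorm01 n k (\<lambda>x. c x - f x) \<le> e / 2" if nk: "(n,k) \<in> T" for n k
    proof -
      have "\<bar>s - t\<bar> * seminorm01 n k (\<lambda>x. c x - f x) \<le> d * M"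
        using s(2) M_ge[OF nk] seminorm01_nonneg[OF Cinf01_diff[OF c fC]] nk T(2)
        by (intro mult_mono) auto
      then show ?thesis using \<open>d * M \<le> e / 2\<close> by (rule order_trans)
    qed
    then have "?H s g \<in> seminorm_ball T e (?H t f)"
      by (rule convex_homotopy_in_seminorm_ball[OF fC g c T(2) s(1)])
    then show "w \<in> {(t, f) \<in> {0..1} \<times> S. ?H t f \<in> U}"
      using ball_U s(1) \<open>g \<in> S\<close> w by auto
  qed
  ultimately show "\<exists>W. openin ?P W \<and> z \<in> W \<and> W \<subseteq> {(t, f) \<in> {0..1} \<times> S. ?H t f \<in> U}"
    by blast
qed

lemma contractible_space_Frechet01_convex:
  assumes S: "S \<subseteq> Cinf01" and "c \<in> S"
    and convex: "\<And>f g t. f \<in> S \<Longrightarrow> g \<in> S \<Longrightarrow> t \<in> {0..1} \<Longrightarrow>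
                   (\<lambda>x. (1 - t) * f x + t * g x) \<in> S"
  shows "contractible_space (subtopology Frechet01 S)"
proof -
  define H where "H z x = (1 - fst z) * snd z x + fst z * c x"
    for z :: "real \<times> (real \<Rightarrow> real)" and x
  let ?P = "prod_topology (top_of_set {0..1}) (subtopology Frechet01 S)"
  have top: "topspace ?P = {0..1} \<times> S"
    using S by (simp add: topspace_Frechet01 Int_absorb1)
  have H_S: "H \<in> topspace ?P \<rightarrow> S"
  proof
    fix z :: "real \<times> (real \<Rightarrow> real)" assume "z \<in> topspace ?P"
    then show "H z \<in> S"
      using convex[of "snd z" c "fst z"] \<open>c \<in> S\<close> unfolding top H_def by (simp add: mem_Times_iff)
  qed
  moreover have "openin ?P {z \<in> topspace ?P. H z \<in> U}" if "openin Frechet01 U" for U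
  proof -
    have "{z \<in> topspace ?P. H z \<in> U}
            = {(t, f) \<in> {0..1} \<times> S. (\<lambda>x. (1 - t) * f x + t * c x) \<in> U}"
      unfolding top H_def by auto
    moreover have "c \<in> Cinf01" using S \<open>c \<in> S\<close> by blast
    ultimately show ?thesis using openin_convex_homotopy_preimage[OF _ S that] by simp
  qed
  moreover have "H \<in> topspace ?P \<rightarrow> topspace Frechet01"
    using H_S S unfolding topspace_Frechet01 by blast
  ultimately have "continuous_map ?P Frechet01 H"
    unfolding continuous_map_def by blast
  then have "continuous_map ?P (subtopology Frechet01 S) H"
    using H_S by (simp add: continuous_map_in_subtopology image_subset_iff_funcset)
  moreover have "H (0, f) = id f" "H (1, f) = c" for f
    unfolding H_def by auto
  ultimately have "homotopic_with (\<lambda>x. True) (subtopology Frechet01 S) (subtopology Frechet01 S)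
                     id (\<lambda>x. c)"
    unfolding homotopic_with_def by blast
  then show ?thesis unfolding contractible_space_def by blast
qed

subsection \<open>Convexity of D01\<close>

definition id01 :: "real \<Rightarrow> real" where "id01 x = (if x \<in> {0<..<1} then x else 0)"

lemma deriv_iterate_id01:
  "x \<in> {0<..<1} \<Longrightarrow> (deriv ^^ k) id01 x = (if k = 0 then x else if k = 1 then 1 else 0)"
proof (induction k arbitrary: x)
  case (Suc k)
  have "((\<lambda>y::real. if k = 0 then y else if k = 1 then 1 else 0) has_real_derivative
          (if Suc k = 1 then 1 else 0)) (at x)"
    by (cases "k = 0") (auto intro!: derivative_eq_intros)
  then have "((deriv ^^ k) id01 has_real_derivative (if Suc k = 1 then 1 else 0)) (at x)"
    by (rule has_field_derivative_transform_within_open[OF _ open_greaterThanLessThan Suc.prems])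
      (simp add: Suc.IH)
  then show ?case by (simp add: DERIV_imp_deriv)
qed (simp add: id01_def)

lemma id01_Cinf01: "id01 \<in> Cinf01"
proof -
  have "((deriv ^^ k) id01) differentiable (at x)" if x: "x \<in> {0<..<1}" for k x
  proof -
    have "((\<lambda>y::real. if k = 0 then y else if k = 1 then 1 else 0) has_real_derivative
            (if k = 0 then 1 else 0)) (at x)"
      by (cases "k = 0") (auto intro!: derivative_eq_intros)
    then have "((deriv ^^ k) id01 has_real_derivative (if k = 0 then 1 else 0)) (at x)"
      by (rule has_field_derivative_transform_within_open[OF _ open_greaterThanLessThan x])
        (simp add: deriv_iterate_id01)
    then show ?thesis using real_differentiable_def by blast
  qed
  then show ?thesis unfolding Cinf01_def by (auto simp: id01_def)
qed

lemma A01_id01: "id01 \<in> A01"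
proof -
  have "\<forall>\<^sub>F x in at_left 1. x = id01 x" "\<forall>\<^sub>F x in at_right 0. x = id01 x"
    using eventually_at_left_real[of 0 1] eventually_at_right_real[of 0 1]
    by (auto simp: id01_def elim: eventually_mono)
  then have "(id01 \<longlongrightarrow> 1) (at_left 1)" "(id01 \<longlongrightarrow> 0) (at_right 0)"
    by (auto intro: tendsto_cong[THEN iffD1, OF _ tendsto_ident_at])
  then show ?thesis unfolding A01_def using id01_Cinf01 by (auto simp: id01_def)
qed

lemma D01_imp_deriv_lower_bound:
  assumes "f \<in> D01" obtains r where "r > 0" "\<And>x. x \<in> {0<..<1} \<Longrightarrow> r \<le> deriv f x"
proof -
  have "0 < (INF x\<in>{0<..<1}. ereal (deriv f x))" using assms unfolding D01_def by auto
  then obtain z where "0 < ereal z" "ereal z < (INF x\<in>{0<..<1}. ereal (deriv f x))"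
    using ereal_dense2 by blast
  then show ?thesis
    by (intro that[of z]) (auto dest: less_INF_D)
qed

lemma D01_if_deriv_lower_bound:
  assumes "f \<in> A01" "r > 0" "\<And>x. x \<in> {0<..<1} \<Longrightarrow> r \<le> deriv f x"
  shows "f \<in> D01"
proof -
  have "ereal r \<le> (INF x\<in>{0<..<1}. ereal (deriv f x))"
    using assms(3) by (intro INF_greatest) simp
  then have "0 < (INF x\<in>{0<..<1}. ereal (deriv f x))"
    using assms(2) by (meson ereal_less(2) less_le_trans)
  moreover have "0 < (SUP x\<in>{0<..<1}. ereal (deriv f x))"
  proof -
    have "r \<le> deriv f (1/2)" by (rule assms(3)) simp
    then have "0 < ereal (deriv f (1/2))" using assms(2) by simp
    also have "\<dots> \<le> (SUP x\<in>{0<..<1}. ereal (deriv f x))" by (rule SUP_upper) simp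
    finally show ?thesis .
  qed
  ultimately show ?thesis unfolding D01_def using assms(1) by blast
qed

lemma D01_id01: "id01 \<in> D01"
  using D01_if_deriv_lower_bound[OF A01_id01, of 1] deriv_iterate_id01[where k = 1] by simp

lemma A01_convex_comb:
  assumes f: "f \<in> A01" and g: "g \<in> A01" and t: "t \<in> {0..1}"
  shows "(\<lambda>x. (1 - t) * f x + t * g x) \<in> A01"
proof -
  have "(1 - t) * f x + t * g x \<in> {0<..<1}" if x: "x \<in> {0<..<1}" for x
  proof -
    have "0 < f x" "f x < 1" "0 < g x" "g x < 1" using f g x unfolding A01_def by auto
    then show ?thesis
      using t convex_bound_lt[of "f x" 1 "g x" "1 - t" t]
        convex_bound_lt[of "- f x" 0 "- g x" "1 - t" t] by auto
  qed
  moreover have "((\<lambda>x. (1 - t) * f x + t * g x) \<longlongrightarrow> (1 - t) * 1 + t * 1) (at_left 1)"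
    using f g unfolding A01_def by (intro tendsto_intros) auto
  moreover have "((\<lambda>x. (1 - t) * f x + t * g x) \<longlongrightarrow> (1 - t) * 0 + t * 0) (at_right 0)"
    using f g unfolding A01_def by (intro tendsto_intros) auto
  moreover have "(\<lambda>x. (1 - t) * f x + t * g x) \<in> Cinf01"
    using f g unfolding A01_def by (auto intro: Cinf01_lincomb)
  ultimately show ?thesis unfolding A01_def by simp
qed

lemma D01_convex_comb:
  assumes f: "f \<in> D01" and g: "g \<in> D01" and t: "t \<in> {0..1}"
  shows "(\<lambda>x. (1 - t) * f x + t * g x) \<in> D01"
proof -
  obtain r s where "r > 0" "s > 0"
    and r: "\<And>x. x \<in> {0<..<1} \<Longrightarrow> r \<le> deriv f x"
    and s: "\<And>x. x \<in> {0<..<1} \<Longrightarrow> s \<le> deriv g x"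
    using D01_imp_deriv_lower_bound[OF f] D01_imp_deriv_lower_bound[OF g] by metis
  have "min r s \<le> deriv (\<lambda>x. (1 - t) * f x + t * g x) x" if x: "x \<in> {0<..<1}" for x
  proof -
    have "deriv (\<lambda>x. (1 - t) * f x + t * g x) x = (1 - t) * deriv f x + t * deriv g x"
      using deriv_iterate_lincomb[of f g x 1] f g x unfolding D01_def A01_def by simp
    moreover have "(1 - t) * min r s + t * min r s \<le> (1 - t) * deriv f x + t * deriv g x"
      using r[OF x] s[OF x] t by (intro add_mono mult_left_mono) auto
    ultimately show ?thesis by (simp add: algebra_simps)
  qed
  moreover have "(\<lambda>x. (1 - t) * f x + t * g x) \<in> A01"
    using A01_convex_comb f g t unfolding D01_def by auto
  ultimately show ?thesis
    using D01_if_deriv_lower_bound[of _ "min r s"] \<open>r > 0\<close> \<open>s > 0\<close> by simp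
qed

theorem proposition8p1:
  shows "contractible_space (subtopology Frechet01 D01)"
proof (rule contractible_space_Frechet01_convex)
  show "D01 \<subseteq> Cinf01" unfolding D01_def A01_def by auto
  show "id01 \<in> D01" by (rule D01_id01)
qed (rule D01_convex_comb)

end
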